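(* Let $\mathfrak N=\{1,\dots,p\}$ and let $\phi:2^{\mathfrak N}\to\{0,1\}$ be a simple game, i.e. $\phi(\mathfrak N)=1$, $\phi(\emptyset)=0$, and $T\subset S$, $\phi(S)=0$ imply $\phi(T)=0$; let $\mathcal W=\{C\subset\mathfrak N:\phi(C)=1\}$ and define the aggregation function $\delta:\{0,1\}^p\to\{0,1\}$ by $$\delta(x_1,\dots,x_p)=\sum_{C\in\mathcal W}\prod_{k\in C}x_k\prod_{k\notin C}(1-x_k).$$ Let $\Delta$ be the associated set function on events, defined by $\mathbb I_{\Delta(A_1,\dots,A_p)}=\delta(\mathbb I_{A_1},\dots,\mathbb I_{A_p})$. Let $(X_1,\Pi_1)$ be a random element with values in $\mathbb E\times[0,1]^p$ (with $\mathbb E\subset\mathbb R^m$ equipped with its Borel $\sigma$-field $\mathcal B$), defined on a probability space with probability measure $\mathbf P_{x,\pi}$ and expectation $\mathbf E_{x,\pi}$ (the law of the process started from the state $(x,\pi)$); write $\Pi_1^i$ for the $i$-th coordinate of $\Pi_1$. Fix a player $i\in\mathfrak N$ and a real function $g_i$ on $\mathbb E\times[0,1]^p$ such that $g_i(X_1,\Pi_1)$ is integrable. For each $j\neq i$ fix a Borel set $C^j$ and let $D_1^j=\{(X_1,\Pi_1)\in C^j\}$. For an event $A$ put ${}^iD_1(A)=\Delta(D_1^1,\dots,D_1^{i-1},A,D_1^{i+1},\dots,D_1^p)$, and for a Borel set $C^i$ put $D_1^i=\{(X_1,\Pi_1)\in C^i\}$ and $$\psi(C^i)=\mathbf E_{x,\pi}\Big[(1-\Pi_1^i)\,\mathbb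 I_{{}^iD_1(D_1^i)}+g_i(X_1,\Pi_1)\,\mathbb I_{\overline{{}^iD_1(D_1^i)}}\Big].$$ Then the set ${}^{*}C^i=\{(x,\pi):1-\pi_i-g_i(x,\pi)\le 0\}$ satisfies $\psi({}^{*}C^i)=\inf_{C^i}\psi(C^i)$, the infimum taken over all Borel sets $C^i$, and $$\psi({}^{*}C^i)=\mathbf E_{x,\pi}\big(1-\Pi_1^i-g_i(X_1,\Pi_1)\big)^{+}\mathbb I_{{}^iD_1(\emptyset)}-\mathbf E_{x,\pi}\big(1-\Pi_1^i-g_i(X_1,\Pi_1)\big)^{-}\mathbb I_{{}^iD_1(\Omega)}+\mathbf E_{x,\pi}\,g_i(X_1,\Pi_1).$$
   Context: This arises in a distributed disorder detection model: sensor $i$ observes a Markov process $X_n$ and the posterior process $\Pi_n^i=\mathbf P(\theta_i\le n\mid\mathcal F_n)$ of its disorder time $\theta_i$; each sensor's stopping decision at time $1$ is the event $D_1^j$, and the system stops when the aggregated decision $\delta$ of the sensors' votes equals $1$, i.e. on $\Delta(D_1^1,\dots,D_1^p)$. Here $(y)^+=\max(y,0)$, $(y)^-=\max(-y,0)$, $\overline{A}$ denotes the complement of an event $A$, and $\Omega$ is the whole sample space. *)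

theory Defs
  imports "HOL-Probability.Probability"
begin

definition simple_game :: "nat \<Rightarrow> (nat set \<Rightarrow> nat) \<Rightarrow> bool" where
  "simple_game p \<phi> \<longleftrightarrow>
     (\<forall>C. C \<subseteq> {1..p} \<longrightarrow> \<phi> C \<in> {0, 1}) \<and>
     \<phi> {1..p} = 1 \<and> \<phi> {} = 0 \<and>
     (\<forall>S T. S \<subseteq> {1..p} \<longrightarrow> T \<subseteq> S \<longrightarrow> \<phi> S = 0 \<longrightarrow> \<phi> T = 0)"

definition winning :: "nat \<Rightarrow> (nat set \<Rightarrow> nat) \<Rightarrow> nat set set" where
  "winning p \<phi> = {C. C \<subseteq> {1..p} \<and> \<phi> C = 1}"

definition agg_delta :: "nat \<Rightarrow> (nat set \<Rightarrow> nat) \<Rightarrow> (nat \<Rightarrow> real) \<Rightarrow> real" where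
  "agg_delta p \<phi> x =
     (\<Sum>C\<in>winning p \<phi>. (\<Prod>k\<in>C. x k) * (\<Prod>k\<in>{1..p} - C. 1 - x k))"

definition agg_Delta :: "'a measure \<Rightarrow> nat \<Rightarrow> (nat set \<Rightarrow> nat) \<Rightarrow> (nat \<Rightarrow> 'a set) \<Rightarrow> 'a set" where
  "agg_Delta M p \<phi> A =
     {\<omega> \<in> space M. agg_delta p \<phi> (\<lambda>k. indicator (A k) \<omega>) = 1}"

definition iD :: "'a measure \<Rightarrow> nat \<Rightarrow> (nat set \<Rightarrow> nat) \<Rightarrow> (nat \<Rightarrow> 'a set) \<Rightarrow> nat \<Rightarrow> 'a set \<Rightarrow> 'a set" where
  "iD M p \<phi> D i A = agg_Delta M p \<phi> (D(i := A))"

text \<open>State space E x [0,1]^p, embedded in the Borel space of 'e x R^{1..p}.\<close>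
definition state_space :: "nat \<Rightarrow> ('e::euclidean_space \<times> (nat \<Rightarrow> real)) measure" where
  "state_space p = borel \<Otimes>\<^sub>M (PiM {1..p} (\<lambda>k. borel))"

definition XPi :: "nat \<Rightarrow> ('a \<Rightarrow> 'e) \<Rightarrow> (nat \<Rightarrow> 'a \<Rightarrow> real) \<Rightarrow> 'a \<Rightarrow> 'e \<times> (nat \<Rightarrow> real)" where
  "XPi p X Q \<omega> = (X \<omega>, restrict (\<lambda>k. Q k \<omega>) {1..p})"

definition psi ::
  "'a measure \<Rightarrow> nat \<Rightarrow> (nat set \<Rightarrow> nat) \<Rightarrow> ('a \<Rightarrow> 'e) \<Rightarrow> (nat \<Rightarrow> 'a \<Rightarrow> real)
   \<Rightarrow> ('e \<times> (nat \<Rightarrow> real) \<Rightarrow> real) \<Rightarrow> (nat \<Rightarrow> ('e \<times> (nat \<Rightarrow> real)) set) \<Rightarrow> nat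
   \<Rightarrow> ('e \<times> (nat \<Rightarrow> real)) set \<Rightarrow> real" where
  "psi M p \<phi> X Q g Cs i Ci =
     (let D = (\<lambda>j. XPi p X Q -` Cs j \<inter> space M);
          E = iD M p \<phi> D i (XPi p X Q -` Ci \<inter> space M)
      in \<integral>\<omega>. (1 - Q i \<omega>) * indicator E \<omega>
              + g (XPi p X Q \<omega>) * indicator (space M - E) \<omega> \<partial>M)"

end

(*
  The aggregation rule is monotone, so player i's vote only chooses between the outcomes
  iD(empty) (stop without i) and iD(Omega) (stop with i), and iD(empty) is contained in
  iD(Omega).  Writing h = 1 - Pi^i - g, the integrand of psi is g + h * 1_{iD(D^i)}, which is
  minimised pointwise by voting to stop exactly where h <= 0.  The optimal integrand is then
  g + h 1_{iD(empty)} - h^- 1_{iD(Omega) - iD(empty)} = g + h^+ 1_{iD(empty)} - h^- 1_{iD(Omega)}.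
*)
theory Submission
  imports Defs
begin

lemma finite_winning: "finite (winning p \<phi>)"
  by (rule finite_subset[of _ "Pow {1..p}"]) (auto simp: winning_def)

lemma agg_delta_indicator:
  "agg_delta p \<phi> (\<lambda>k. indicator (A k) \<omega>) = (if \<phi> {k\<in>{1..p}. \<omega> \<in> A k} = 1 then 1 else 0)"
proof -
  let ?S = "{k\<in>{1..p}. \<omega> \<in> A k}"
  have summand: "(\<Prod>k\<in>C. indicator (A k) \<omega>) * (\<Prod>k\<in>{1..p} - C. 1 - indicator (A k) \<omega>)
      = (if C = ?S then 1 else 0 :: real)" if C: "C \<subseteq> {1..p}" for C
  proof (cases "C = ?S")
    case True
    then show ?thesis by (auto intro!: prod.neutral)
  next
    case False
    then obtain k where "(k \<in> C) \<noteq> (k \<in> ?S)" by blast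
    then have "k \<in> C \<and> \<omega> \<notin> A k \<or> k \<in> {1..p} - C \<and> \<omega> \<in> A k"
      using C by blast
    moreover have "finite C" using C finite_subset by blast
    ultimately have "(\<Prod>k\<in>C. indicator (A k) \<omega>) * (\<Prod>k\<in>{1..p} - C. 1 - indicator (A k) \<omega>) = (0::real)"
      by (auto simp: prod_zero_iff indicator_def)
    with False show ?thesis by simp
  qed
  have "agg_delta p \<phi> (\<lambda>k. indicator (A k) \<omega>) = (\<Sum>C\<in>winning p \<phi>. if C = ?S then 1 else 0)"
    unfolding agg_delta_def by (intro sum.cong refl summand) (simp add: winning_def)
  also have "\<dots> = (if ?S \<in> winning p \<phi> then 1 else 0)"
    using finite_winning by (simp add: sum.delta')
  finally show ?thesis by (auto simp: winning_def)
qed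

lemma mem_agg_Delta:
  "\<omega> \<in> agg_Delta M p \<phi> A \<longleftrightarrow> \<omega> \<in> space M \<and> \<phi> {k\<in>{1..p}. \<omega> \<in> A k} = 1"
  by (simp add: agg_Delta_def agg_delta_indicator)

lemma agg_Delta_mono:
  assumes "simple_game p \<phi>" "\<And>k. k \<in> {1..p} \<Longrightarrow> A k \<subseteq> B k"
  shows "agg_Delta M p \<phi> A \<subseteq> agg_Delta M p \<phi> B"
proof
  fix \<omega> assume "\<omega> \<in> agg_Delta M p \<phi> A"
  then have \<omega>: "\<omega> \<in> space M" and win: "\<phi> {k\<in>{1..p}. \<omega> \<in> A k} = 1"
    by (simp_all add: mem_agg_Delta)
  let ?SA = "{k\<in>{1..p}. \<omega> \<in> A k}" and ?SB = "{k\<in>{1..p}. \<omega> \<in> B k}"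
  have sub: "?SA \<subseteq> ?SB" "?SB \<subseteq> {1..p}" using assms(2) by auto
  have "\<phi> ?SB \<in> {0, 1}" "\<phi> ?SB = 0 \<Longrightarrow> \<phi> ?SA = 0"
    using assms(1) sub unfolding simple_game_def by blast+
  with win have "\<phi> ?SB = 1" by auto
  with \<omega> show "\<omega> \<in> agg_Delta M p \<phi> B" by (simp add: mem_agg_Delta)
qed

lemma sets_agg_Delta:
  assumes "\<And>k. k \<in> {1..p} \<Longrightarrow> A k \<in> sets M"
  shows "agg_Delta M p \<phi> A \<in> sets M"
proof -
  have "(\<lambda>\<omega>. agg_delta p \<phi> (\<lambda>k. indicator (A k) \<omega>)) \<in> borel_measurable M"
    unfolding agg_delta_def using assms
    by (intro borel_measurable_sum borel_measurable_times borel_measurable_prod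
        borel_measurable_diff) (auto simp: winning_def)
  then show ?thesis unfolding agg_Delta_def by measurable
qed

lemma iD_split:
  "iD M p \<phi> D i A = (A \<inter> iD M p \<phi> D i (space M)) \<union> (iD M p \<phi> D i {} - A)"
proof (intro set_eqI)
  fix \<omega>
  show "\<omega> \<in> iD M p \<phi> D i A \<longleftrightarrow>
      \<omega> \<in> (A \<inter> iD M p \<phi> D i (space M)) \<union> (iD M p \<phi> D i {} - A)"
  proof (cases "\<omega> \<in> A")
    case True
    then have "\<omega> \<in> space M \<Longrightarrow>
        {k\<in>{1..p}. \<omega> \<in> (D(i := A)) k} = {k\<in>{1..p}. \<omega> \<in> (D(i := space M)) k}"
      by auto
    then have "\<omega> \<in> iD M p \<phi> D i A \<longleftrightarrow> \<omega> \<in> iD M p \<phi> D i (space M)"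
      unfolding iD_def mem_agg_Delta by metis
    with True show ?thesis by blast
  next
    case False
    then have "{k\<in>{1..p}. \<omega> \<in> (D(i := A)) k} = {k\<in>{1..p}. \<omega> \<in> (D(i := {})) k}"
      by auto
    then have "\<omega> \<in> iD M p \<phi> D i A \<longleftrightarrow> \<omega> \<in> iD M p \<phi> D i {}"
      unfolding iD_def mem_agg_Delta by metis
    with False show ?thesis by blast
  qed
qed

lemma iD_mono:
  "simple_game p \<phi> \<Longrightarrow> A \<subseteq> B \<Longrightarrow> iD M p \<phi> D i A \<subseteq> iD M p \<phi> D i B"
  unfolding iD_def by (rule agg_Delta_mono) auto

lemma iD_threshold:
  assumes "simple_game p \<phi>"
  shows "iD M p \<phi> D i {\<omega> \<in> space M. P \<omega>} = iD M p \<phi> D i {} \<union> {\<omega> \<in> iD M p \<phi> D i (space M). P \<omega>}"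
proof -
  have "iD M p \<phi> D i {} \<subseteq> iD M p \<phi> D i (space M)"
    by (rule iD_mono[OF assms]) simp
  moreover have "iD M p \<phi> D i (space M) \<subseteq> space M"
    unfolding iD_def by (auto simp: mem_agg_Delta)
  ultimately show ?thesis
    by (subst iD_split) blast
qed

lemma sets_iD:
  "(\<And>k. k \<in> {1..p} \<Longrightarrow> k \<noteq> i \<Longrightarrow> D k \<in> sets M) \<Longrightarrow> A \<in> sets M \<Longrightarrow> iD M p \<phi> D i A \<in> sets M"
  unfolding iD_def by (rule sets_agg_Delta) auto

lemma measurable_XPi:
  "X \<in> borel_measurable M \<Longrightarrow> (\<And>k. k \<in> {1..p} \<Longrightarrow> Q k \<in> borel_measurable M)
    \<Longrightarrow> XPi p X Q \<in> measurable M (state_space p)"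
  unfolding XPi_def state_space_def by (intro measurable_Pair measurable_restrict) auto

lemma mult_indicator_bang_bang_le:
  fixes h :: "'a \<Rightarrow> real"
  assumes "a \<subseteq> E" "E \<subseteq> b"
  shows "h x * indicator (a \<union> {x\<in>b. h x \<le> 0}) x \<le> h x * indicator E x"
  using assms by (auto simp: indicator_def)

lemma mult_indicator_bang_bang_eq:
  fixes h :: "'a \<Rightarrow> real"
  assumes "a \<subseteq> b"
  shows "h x * indicator (a \<union> {x\<in>b. h x \<le> 0}) x
    = max (h x) 0 * indicator a x - max (- h x) 0 * indicator b x"
  using assms by (auto simp: indicator_def max_def)

lemma integral_bang_bang_le:
  fixes h :: "'a \<Rightarrow> real"
  assumes h: "integrable M h" and sets: "a \<in> sets M" "b \<in> sets M" "E \<in> sets M"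
    and "a \<subseteq> E" "E \<subseteq> b"
  shows "(\<integral>x. h x * indicator (a \<union> {x\<in>b. h x \<le> 0}) x \<partial>M) \<le> (\<integral>x. h x * indicator E x \<partial>M)"
proof (rule integral_mono)
  have "h \<in> borel_measurable M" using h by (rule borel_measurable_integrable)
  then have "a \<union> {x\<in>b. h x \<le> 0} \<in> sets M" using sets by measurable
  then show "integrable M (\<lambda>x. h x * indicator (a \<union> {x\<in>b. h x \<le> 0}) x)"
    using h by (rule integrable_real_mult_indicator)
  show "integrable M (\<lambda>x. h x * indicator E x)"
    using sets(3) h by (rule integrable_real_mult_indicator)
  show "h x * indicator (a \<union> {x\<in>b. h x \<le> 0}) x \<le> h x * indicator E x" for x
    using assms(5,6) by (rule mult_indicator_bang_bang_le)
qed

lemma integral_bang_bang_eq: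
  fixes h :: "'a \<Rightarrow> real"
  assumes h: "integrable M h" and sets: "a \<in> sets M" "b \<in> sets M" and "a \<subseteq> b"
  shows "(\<integral>x. h x * indicator (a \<union> {x\<in>b. h x \<le> 0}) x \<partial>M)
    = (\<integral>x. max (h x) 0 * indicator a x \<partial>M) - (\<integral>x. max (- h x) 0 * indicator b x \<partial>M)"
  unfolding mult_indicator_bang_bang_eq[OF assms(4)]
  using sets h
  by (intro Bochner_Integration.integral_diff integrable_real_mult_indicator integrable_max
      integrable_minus integrable_zero)

locale sensor_vote =
  fixes M :: "'a measure" and p :: nat and \<phi> :: "nat set \<Rightarrow> nat"
    and X :: "'a \<Rightarrow> 'e::euclidean_space" and Q :: "nat \<Rightarrow> 'a \<Rightarrow> real"
    and g :: "'e \<times> (nat \<Rightarrow> real) \<Rightarrow> real"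
    and Cs :: "nat \<Rightarrow> ('e \<times> (nat \<Rightarrow> real)) set" and i :: nat
  assumes prob: "prob_space M"
    and game: "simple_game p \<phi>"
    and X: "X \<in> borel_measurable M"
    and Q: "\<And>k. k \<in> {1..p} \<Longrightarrow> Q k \<in> borel_measurable M"
    and Q_range: "\<And>k \<omega>. k \<in> {1..p} \<Longrightarrow> \<omega> \<in> space M \<Longrightarrow> Q k \<omega> \<in> {0..1}"
    and i: "i \<in> {1..p}"
    and g: "g \<in> borel_measurable (state_space p)"
    and g_integrable: "integrable M (\<lambda>\<omega>. g (XPi p X Q \<omega>))"
    and Cs: "\<And>j. j \<in> {1..p} \<Longrightarrow> j \<noteq> i \<Longrightarrow> Cs j \<in> sets (state_space p)"
begin

abbreviation Y :: "'a \<Rightarrow> 'e \<times> (nat \<Rightarrow> real)" where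
  "Y \<equiv> XPi p X Q"

definition votes :: "nat \<Rightarrow> 'a set" where
  "votes = (\<lambda>j. Y -` Cs j \<inter> space M)"

text \<open>Cost of stopping (the false alarm probability \<open>1 - \<Pi>\<^sup>i\<close>) minus cost of continuing.\<close>
definition excess :: "'a \<Rightarrow> real" where
  "excess \<omega> = 1 - Q i \<omega> - g (Y \<omega>)"

definition optimal_region :: "('e \<times> (nat \<Rightarrow> real)) set" where
  "optimal_region = {z \<in> space (state_space p). 1 - snd z i - g z \<le> 0}"

lemma measurable_Y: "Y \<in> measurable M (state_space p)"
  using X Q by (rule measurable_XPi)

lemma sets_iD_votes: "A \<in> sets M \<Longrightarrow> iD M p \<phi> votes i A \<in> sets M"
  by (rule sets_iD) (auto simp: votes_def intro!: measurable_sets[OF measurable_Y] Cs)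

lemma integrable_excess: "integrable M excess"
proof -
  interpret finite_measure M using prob by (rule prob_space.axioms)
  have "integrable M (Q i)"
    using Q_range i by (intro integrable_const_bound[where B=1]) (auto intro: Q)
  then show ?thesis
    unfolding excess_def by (intro Bochner_Integration.integrable_diff integrable_const g_integrable)
qed

lemma sets_optimal_region: "optimal_region \<in> sets (state_space p)"
proof -
  have "(\<lambda>z. snd z i) \<in> borel_measurable (state_space p)"
    unfolding state_space_def using i by measurable
  then show ?thesis unfolding optimal_region_def using g by measurable
qed

lemma vimage_optimal_region: "Y -` optimal_region \<inter> space M = {\<omega> \<in> space M. excess \<omega> \<le> 0}"
  using measurable_space[OF measurable_Y] i
  by (auto simp: optimal_region_def excess_def XPi_def)

lemma psi_eq_integral_excess:
  assumes "C \<in> sets (state_space p)"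
  shows "psi M p \<phi> X Q g Cs i C
    = (\<integral>\<omega>. g (Y \<omega>) \<partial>M) + (\<integral>\<omega>. excess \<omega> * indicator (iD M p \<phi> votes i (Y -` C \<inter> space M)) \<omega> \<partial>M)"
proof -
  let ?E = "iD M p \<phi> votes i (Y -` C \<inter> space M)"
  have E: "?E \<in> sets M"
    using measurable_sets[OF measurable_Y assms] by (rule sets_iD_votes)
  have "psi M p \<phi> X Q g Cs i C
      = (\<integral>\<omega>. (1 - Q i \<omega>) * indicator ?E \<omega> + g (Y \<omega>) * indicator (space M - ?E) \<omega> \<partial>M)"
    by (simp add: psi_def votes_def Let_def)
  also have "\<dots> = (\<integral>\<omega>. g (Y \<omega>) + excess \<omega> * indicator ?E \<omega> \<partial>M)"
    using sets.sets_into_space[OF E]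
    by (intro Bochner_Integration.integral_cong) (auto simp: indicator_def excess_def)
  also have "\<dots> = (\<integral>\<omega>. g (Y \<omega>) \<partial>M) + (\<integral>\<omega>. excess \<omega> * indicator ?E \<omega> \<partial>M)"
    using E by (intro Bochner_Integration.integral_add g_integrable
        integrable_real_mult_indicator integrable_excess)
  finally show ?thesis .
qed

lemma iD_votes_optimal_region:
  "iD M p \<phi> votes i (Y -` optimal_region \<inter> space M)
    = iD M p \<phi> votes i {} \<union> {\<omega> \<in> iD M p \<phi> votes i (space M). excess \<omega> \<le> 0}"
  unfolding vimage_optimal_region by (rule iD_threshold[OF game])

lemma psi_optimal_region_le:
  assumes "C \<in> sets (state_space p)"
  shows "psi M p \<phi> X Q g Cs i optimal_region \<le> psi M p \<phi> X Q g Cs i C"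
  unfolding psi_eq_integral_excess[OF assms] psi_eq_integral_excess[OF sets_optimal_region]
    iD_votes_optimal_region
  using measurable_sets[OF measurable_Y assms]
  by (intro add_left_mono integral_bang_bang_le integrable_excess sets_iD_votes iD_mono[OF game]) auto

lemma psi_optimal_region:
  "psi M p \<phi> X Q g Cs i optimal_region
    = (\<integral>\<omega>. max (excess \<omega>) 0 * indicator (iD M p \<phi> votes i {}) \<omega> \<partial>M)
      - (\<integral>\<omega>. max (- excess \<omega>) 0 * indicator (iD M p \<phi> votes i (space M)) \<omega> \<partial>M)
      + (\<integral>\<omega>. g (Y \<omega>) \<partial>M)"
proof -
  have "iD M p \<phi> votes i {} \<subseteq> iD M p \<phi> votes i (space M)"
    by (rule iD_mono[OF game]) simp
  then show ?thesis
    unfolding psi_eq_integral_excess[OF sets_optimal_region] iD_votes_optimal_region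
    by (subst integral_bang_bang_eq) (auto intro: integrable_excess sets_iD_votes)
qed

end

theorem lemma1:
  fixes M :: "'a measure" and p :: nat and \<phi> :: "nat set \<Rightarrow> nat"
    and X :: "'a \<Rightarrow> 'e::euclidean_space" and Q :: "nat \<Rightarrow> 'a \<Rightarrow> real"
    and g :: "'e \<times> (nat \<Rightarrow> real) \<Rightarrow> real"
    and Cs :: "nat \<Rightarrow> ('e \<times> (nat \<Rightarrow> real)) set" and i :: nat
  assumes "prob_space M"
    and "simple_game p \<phi>"
    and "X \<in> borel_measurable M"
    and "\<And>k. k \<in> {1..p} \<Longrightarrow> Q k \<in> borel_measurable M"
    and "\<And>k \<omega>. k \<in> {1..p} \<Longrightarrow> \<omega> \<in> space M \<Longrightarrow> Q k \<omega> \<in> {0..1}"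
    and "i \<in> {1..p}"
    and "g \<in> borel_measurable (state_space p)"
    and "integrable M (\<lambda>\<omega>. g (XPi p X Q \<omega>))"
    and "\<And>j. j \<in> {1..p} \<Longrightarrow> j \<noteq> i \<Longrightarrow> Cs j \<in> sets (state_space p)"
  shows "psi M p \<phi> X Q g Cs i {z \<in> space (state_space p). 1 - snd z i - g z \<le> 0}
           = (INF C \<in> sets (state_space p). psi M p \<phi> X Q g Cs i C)
       \<and> psi M p \<phi> X Q g Cs i {z \<in> space (state_space p). 1 - snd z i - g z \<le> 0}
           = (let D = (\<lambda>j. XPi p X Q -` Cs j \<inter> space M) in
                (\<integral>\<omega>. max (1 - Q i \<omega> - g (XPi p X Q \<omega>)) 0
                       * indicator (iD M p \<phi> D i {}) \<omega> \<partial>M)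
              - (\<integral>\<omega>. max (- (1 - Q i \<omega> - g (XPi p X Q \<omega>))) 0
                       * indicator (iD M p \<phi> D i (space M)) \<omega> \<partial>M)
              + (\<integral>\<omega>. g (XPi p X Q \<omega>) \<partial>M))"
proof -
  interpret sensor_vote M p \<phi> X Q g Cs i
    by (rule sensor_vote.intro) (fact assms)+
  have "psi M p \<phi> X Q g Cs i optimal_region = (INF C \<in> sets (state_space p). psi M p \<phi> X Q g Cs i C)"
  proof (rule cInf_eq_minimum[symmetric])
    show "psi M p \<phi> X Q g Cs i optimal_region \<in> psi M p \<phi> X Q g Cs i ` sets (state_space p)"
      using sets_optimal_region by (rule imageI)
  qed (auto intro: psi_optimal_region_le)
  with psi_optimal_region show ?thesis
    unfolding optimal_region_def votes_def excess_def Let_def by simp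
qed

end
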